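(* Let $A\in GL(n,\mathbb Z)$ with columns $\mathbf a_1,\dots,\mathbf a_n$ and $\lambda\in\mathbb R^n$. Let $\phi^*$ be the automorphism of $\overline{\mathbb R}[x_1^{\pm1},\dots,x_n^{\pm1}]$ with $\phi^*(x_i)=\lambda_i\odot\mathbf x^{\mathbf a_i}$, let $\phi^*_A$ be the automorphism (of $\overline{\mathbb R}$- or $\mathbb B$-Laurent polynomials) with $\phi_A^*(x_i)=\mathbf x^{\mathbf a_i}$, and let $\operatorname{trop}(\phi):\mathbb R^n\to\mathbb R^n$ be $\mathbf w\mapsto A^T\mathbf w+\lambda$. If $I\subseteq\overline{\mathbb R}[x_1^{\pm1},\dots,x_n^{\pm1}]$ is a tropical ideal and $I'=(\phi^* )^{-1}(I)$, then $I'$ is a tropical ideal, $\phi^*_A(\operatorname{in}_{\operatorname{trop}(\phi)(\mathbf w)}(I'))=\operatorname{in}_{\mathbf w}(I)$ for all $\mathbf w\in\mathbb R^n$, and $V(I')=\operatorname{trop}(\phi)(V(I))$.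
   Context: $\overline{\mathbb R}=(\mathbb R\cup\{\infty\},\min,+)$, $\odot=+$, $\mathbb B=\{0,\infty\}$. $[f]_{\mathbf x^{\mathbf u}}$ is the coefficient of $\mathbf x^{\mathbf u}$, $f(\mathbf w)=\min_{\mathbf u}([f]_{\mathbf x^{\mathbf u}}+\mathbf u\cdot\mathbf w)$. Tropical ideal: for $f,g\in I$ and $\mathbf x^{\mathbf u}$ with $[f]_{\mathbf x^{\mathbf u}}=[g]_{\mathbf x^{\mathbf u}}\ne\infty$ there is $h\in I$ with $[h]_{\mathbf x^{\mathbf u}}=\infty$ and $[h]_{\mathbf x^{\mathbf v}}\ge\min([f]_{\mathbf x^{\mathbf v}},[g]_{\mathbf x^{\mathbf v}})$ for all $\mathbf v$, with equality when $[f]_{\mathbf x^{\mathbf v}}\ne[g]_{\mathbf x^{\mathbf v}}$. $\operatorname{in}_{\mathbf w}(f)=\bigoplus_{\mathbf u:[f]_{\mathbf x^{\mathbf u}}+\mathbf u\cdot\mathbf w=f(\mathbf w)}\mathbf x^{\mathbf u}\in\mathbb B[x^{\pm1}]$, $\operatorname{in}_{\mathbf w}(I)=\{\operatorname{in}_{\mathbf w}(f):f\in I\}$. $V(I)=\{\mathbf w\in\mathbb R^n:$ for every $f\in I$, $f\ne\infty$, the minimum in $f(\mathbf w)$ is attained at least twice$\}$. *)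

theory Defs
  imports "HOL-Analysis.Analysis"
begin

text \<open>Tropical Laurent polynomials in n variables (n encoded by the finite index type 'n)
  over Rbar = (R \<union> {\<infinity>}, min, +). A polynomial is its coefficient function on exponent
  vectors in Z^n; coefficients live in ereal and are never -\<infinity>; the tropical zero is \<infinity>.\<close>

type_synonym 'n tpoly = "int ^ 'n \<Rightarrow> ereal"

definition is_tpoly :: "'n::finite tpoly \<Rightarrow> bool" where
  "is_tpoly f \<longleftrightarrow> finite {u. f u \<noteq> \<infinity>} \<and> (\<forall>u. f u \<noteq> -\<infinity>)"

definition wdot :: "real ^ 'n::finite \<Rightarrow> int ^ 'n \<Rightarrow> real" where
  "wdot w u = (\<Sum>i\<in>UNIV. w $ i * real_of_int (u $ i))"

definition tadd :: "'n::finite tpoly \<Rightarrow> 'n tpoly \<Rightarrow> 'n tpoly" where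
  "tadd f g = (\<lambda>u. min (f u) (g u))"

definition tmul :: "'n::finite tpoly \<Rightarrow> 'n tpoly \<Rightarrow> 'n tpoly" where
  "tmul f g = (\<lambda>u. Inf {f a + g b | a b. a + b = u})"

definition tzero :: "'n::finite tpoly" where
  "tzero = (\<lambda>u. \<infinity>)"

definition teval :: "'n::finite tpoly \<Rightarrow> real ^ 'n \<Rightarrow> ereal" where
  "teval f w = Inf {f u + ereal (wdot w u) | u. True}"

definition is_tideal_set :: "'n::finite tpoly set \<Rightarrow> bool" where
  "is_tideal_set I \<longleftrightarrow> (\<forall>f\<in>I. is_tpoly f) \<and> tzero \<in> I \<and>
     (\<forall>f\<in>I. \<forall>g\<in>I. tadd f g \<in> I) \<and>
     (\<forall>f\<in>I. \<forall>g. is_tpoly g \<longrightarrow> tmul g f \<in> I)"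

definition tropical_ideal :: "'n::finite tpoly set \<Rightarrow> bool" where
  "tropical_ideal I \<longleftrightarrow> is_tideal_set I \<and>
     (\<forall>f\<in>I. \<forall>g\<in>I. \<forall>u. f u = g u \<and> f u \<noteq> \<infinity> \<longrightarrow>
        (\<exists>h\<in>I. h u = \<infinity> \<and>
           (\<forall>v. h v \<ge> min (f v) (g v) \<and> (f v \<noteq> g v \<longrightarrow> h v = min (f v) (g v)))))"

text \<open>Initial form in_w(f) in B[x^{\<pm>1}], B = {0,\<infinity>} \<subseteq> Rbar; coefficient 0 exactly at
  the exponents where the minimum in f(w) is attained.\<close>
definition initial :: "real ^ 'n::finite \<Rightarrow> 'n tpoly \<Rightarrow> 'n tpoly" where
  "initial w f = (\<lambda>u. if f u \<noteq> \<infinity> \<and> f u + ereal (wdot w u) = teval f w then 0 else \<infinity>)"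

definition initial_ideal :: "real ^ 'n::finite \<Rightarrow> 'n tpoly set \<Rightarrow> 'n tpoly set" where
  "initial_ideal w I = initial w ` I"

definition tvariety :: "'n::finite tpoly set \<Rightarrow> (real ^ 'n) set" where
  "tvariety I = {w. \<forall>f\<in>I. f \<noteq> tzero \<longrightarrow>
      (\<exists>u v. u \<noteq> v \<and> f u + ereal (wdot w u) = teval f w \<and> f v + ereal (wdot w v) = teval f w)}"

text \<open>The semiring map phi^* determined by x_i \<mapsto> lambda_i \<odot> x^{a_i} (a_i = i-th column of A):
  phi^*(\<Oplus>_u c_u x^u) = \<Oplus>_u (c_u + lambda.u) x^{A u}; like terms are combined by min.
  phi^*_A is the case lambda = 0.\<close>
definition phi_star :: "int ^ 'n ^ 'n \<Rightarrow> real ^ 'n \<Rightarrow> 'n::finite tpoly \<Rightarrow> 'n tpoly" where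
  "phi_star A lam f = (\<lambda>v. Inf {f u + ereal (wdot lam u) | u. A *v u = v})"

definition trop_phi :: "int ^ 'n ^ 'n \<Rightarrow> real ^ 'n \<Rightarrow> real ^ 'n \<Rightarrow> real ^ 'n::finite" where
  "trop_phi A lam w = (\<chi> i. (\<Sum>j\<in>UNIV. real_of_int (A $ j $ i) * w $ j) + lam $ i)"

end

theory Submission
  imports Defs
begin

(* Since A is unimodular, u \<mapsto> A u permutes the exponent lattice Z^n, and phi^* merely
   relabels monomials: phi^*(f)(A u) = f(u) + lambda.u.  So phi^* is a bijection of coefficient
   functions commuting with tropical sum and product, and I' is just the preimage of I.
   Adding the real number lambda.u to the coefficient of x^u is an order isomorphism of Rbar
   fixing \<infinity>, so the elimination axiom transfers.  Finally (A u).w + lambda.u = u.trop(phi)(w),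
   so the terms of phi^*(f) attaining the minimum at w are the images of the terms of f attaining
   it at trop(phi)(w); this gives both the initial ideals and the tropical varieties. *)

lemma bij_matrix_vector_mult:
  fixes A :: "'a::semiring_1 ^ 'n::finite ^ 'm::finite"
  assumes "invertible A"
  shows "bij ((*v) A)"
proof -
  obtain B where "A ** B = mat 1" "B ** A = mat 1"
    using assms unfolding invertible_def by blast
  then show ?thesis
    by (intro o_bij[of "(*v) B"]) (auto simp: fun_eq_iff matrix_vector_mul_assoc)
qed

lemma surj_vector_matrix_mult:
  fixes A :: "'a::semiring_1 ^ 'n::finite ^ 'm::finite"
  assumes "invertible A"
  shows "surj (\<lambda>x. x v* A)"
proof -
  obtain B where "B ** A = mat 1"
    using assms unfolding invertible_def by blast
  then have "y = (y v* B) v* A" for y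
    by (simp add: vector_matrix_mul_assoc)
  then show ?thesis by blast
qed

lemma map_matrix_of_int_mult:
  fixes A :: "int ^ 'n::finite ^ 'm::finite" and B :: "int ^ 'p::finite ^ 'n"
  shows "(map_matrix of_int (A ** B) :: 'a::ring_1 ^ 'p ^ 'm) =
    map_matrix of_int A ** map_matrix of_int B"
  by (simp add: matrix_matrix_mult_def vec_eq_iff)

lemma invertible_map_matrix_of_int:
  fixes A :: "int ^ 'n::finite ^ 'm::finite"
  assumes "invertible A"
  shows "invertible (map_matrix of_int A :: 'a::ring_1 ^ 'n ^ 'm)"
proof -
  obtain B where "A ** B = mat 1" "B ** A = mat 1"
    using assms unfolding invertible_def by blast
  moreover have "map_matrix of_int (mat 1 :: int ^ 'k::finite ^ 'k) = (mat 1 :: 'a ^ 'k ^ 'k)"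
    by (simp add: mat_def vec_eq_iff)
  ultimately show ?thesis
    unfolding invertible_def by (metis map_matrix_of_int_mult)
qed

lemma Inf_image_add_ereal:
  fixes S :: "ereal set"
  shows "Inf ((\<lambda>x. x + ereal c) ` S) = Inf S + ereal c"
proof (cases "S = {}")
  case False
  show ?thesis
    by (rule continuous_at_Inf_mono[symmetric])
       (auto simp: mono_def add_right_mono continuous_within False intro: tendsto_add_left_ereal)
qed (simp add: top_ereal_def)

lemma ereal_add_real_le_iff [simp]: "x + ereal c \<le> y + ereal c \<longleftrightarrow> x \<le> y"
  by (cases x; cases y) auto

lemma ereal_add_real_eq_iff [simp]: "x + ereal c = y + ereal c \<longleftrightarrow> x = y"
  by (cases x; cases y) auto

lemma ereal_diff_add_real [simp]: "x - ereal c + ereal c = x"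
  by (cases x) auto

lemma min_ereal_add_real: "min (x + ereal c) (y + ereal c) = min x y + ereal c"
  by (simp add: min_def)

lemma wdot_add_left: "wdot (w + w') u = wdot w u + wdot w' u"
  by (simp add: wdot_def distrib_right sum.distrib)

lemma wdot_add_right: "wdot w (u + u') = wdot w u + wdot w u'"
  by (simp add: wdot_def distrib_left sum.distrib)

lemma trop_phi_eq_vector_matrix_mult:
  "trop_phi A lam w = w v* map_matrix real_of_int A + lam"
  by (simp add: trop_phi_def vector_matrix_mult_def vec_eq_iff mult.commute)

lemma wdot_trop_phi: "wdot (trop_phi A lam w) u = wdot w (A *v u) + wdot lam u"
proof -
  have "wdot (w v* map_matrix real_of_int A) u = wdot w (A *v u)"
    unfolding wdot_def vector_matrix_mult_def matrix_vector_mult_def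
    by (simp add: sum_distrib_left sum_distrib_right mult_ac of_int_sum) (rule sum.swap)
  then show ?thesis
    by (simp add: trop_phi_eq_vector_matrix_mult wdot_add_left)
qed

lemma is_tpoly_comp_bij:
  assumes "bij \<sigma>"
  shows "is_tpoly (f \<circ> \<sigma>) \<longleftrightarrow> is_tpoly f"
proof -
  have "finite {u. f (\<sigma> u) \<noteq> \<infinity>} \<longleftrightarrow> finite {v. f v \<noteq> \<infinity>}"
    using finite_vimage_iff[OF assms, of "{v. f v \<noteq> \<infinity>}"] by (simp add: vimage_def)
  moreover have "(\<forall>u. f (\<sigma> u) \<noteq> -\<infinity>) \<longleftrightarrow> (\<forall>v. f v \<noteq> -\<infinity>)"
    using bij_is_surj[OF assms] by (metis surj_def)
  ultimately show ?thesis
    unfolding is_tpoly_def o_def by blast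
qed

lemma is_tpoly_add_ereal: "is_tpoly (\<lambda>u. f u + ereal (c u)) \<longleftrightarrow> is_tpoly f"
  unfolding is_tpoly_def by simp

lemma phi_star_tzero: "phi_star A lam tzero = tzero"
  unfolding phi_star_def tzero_def by (auto simp: fun_eq_iff Inf_eq_PInfty)

definition min_attained_twice :: "'n::finite tpoly \<Rightarrow> real ^ 'n \<Rightarrow> bool" where
  "min_attained_twice f w \<longleftrightarrow>
     (\<exists>u v. u \<noteq> v \<and> f u + ereal (wdot w u) = teval f w \<and> f v + ereal (wdot w v) = teval f w)"

lemma tvariety_altdef: "tvariety I = {w. \<forall>f\<in>I. f \<noteq> tzero \<longrightarrow> min_attained_twice f w}"
  by (simp add: tvariety_def min_attained_twice_def)

context
  fixes A :: "int ^ 'n::finite ^ 'n"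
  assumes A: "invertible A"
begin

lemma matrix_vector_mult_cancel: "A *v u = A *v v \<longleftrightarrow> u = v"
  using bij_matrix_vector_mult[OF A] by (auto dest: bij_is_inj injD)

lemma ex_matrix_vector_mult_eq: "\<exists>u. v = A *v u"
  using bij_matrix_vector_mult[OF A] by (simp add: bij_is_surj surjD)

lemma phi_star_mult_vec: "phi_star A lam f (A *v u) = f u + ereal (wdot lam u)"
proof -
  have "{f u' + ereal (wdot lam u') | u'. A *v u' = A *v u} = {f u + ereal (wdot lam u)}"
    by (auto simp: matrix_vector_mult_cancel)
  then show ?thesis unfolding phi_star_def by simp
qed

lemma phi_star_eq_iff:
  "phi_star A lam f = F \<longleftrightarrow> (\<forall>u. F (A *v u) = f u + ereal (wdot lam u))"
proof
  assume F: "\<forall>u. F (A *v u) = f u + ereal (wdot lam u)"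
  show "phi_star A lam f = F"
  proof
    fix v
    obtain u where "v = A *v u"
      using ex_matrix_vector_mult_eq by blast
    then show "phi_star A lam f v = F v"
      using F by (simp add: phi_star_mult_vec)
  qed
qed (auto simp: phi_star_mult_vec)

lemma surj_phi_star: "surj (phi_star A lam)"
proof (rule surjI)
  show "phi_star A lam (\<lambda>u. F (A *v u) - ereal (wdot lam u)) = F" for F
    unfolding phi_star_eq_iff by simp
qed

lemma inj_phi_star: "inj (phi_star A lam)"
proof (rule injI)
  fix f g
  assume "phi_star A lam f = phi_star A lam g"
  then have "phi_star A lam f (A *v u) = phi_star A lam g (A *v u)" for u
    by simp
  then show "f = g"
    by (simp add: phi_star_mult_vec fun_eq_iff)
qed

lemma phi_star_eq_tzero_iff: "phi_star A lam f = tzero \<longleftrightarrow> f = tzero"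
  using injD[OF inj_phi_star] phi_star_tzero by metis

lemma is_tpoly_phi_star_iff: "is_tpoly (phi_star A lam f) \<longleftrightarrow> is_tpoly f"
proof -
  have "is_tpoly (phi_star A lam f) \<longleftrightarrow> is_tpoly (phi_star A lam f \<circ> (*v) A)"
    using is_tpoly_comp_bij[OF bij_matrix_vector_mult[OF A]] by simp
  also have "phi_star A lam f \<circ> (*v) A = (\<lambda>u. f u + ereal (wdot lam u))"
    by (simp add: fun_eq_iff phi_star_mult_vec)
  finally show ?thesis
    by (simp only: is_tpoly_add_ereal)
qed

lemma phi_star_tadd: "phi_star A lam (tadd f g) = tadd (phi_star A lam f) (phi_star A lam g)"
  by (simp add: phi_star_eq_iff tadd_def phi_star_mult_vec min_ereal_add_real)

lemma phi_star_tmul: "phi_star A lam (tmul g f) = tmul (phi_star A lam g) (phi_star A lam f)"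
  unfolding phi_star_eq_iff
proof
  fix u
  have pairs: "{(a', b'). a' + b' = A *v u} = (\<lambda>(a, b). (A *v a, A *v b)) ` {(a, b). a + b = u}"
  proof (intro equalityI subsetI)
    fix p assume p: "p \<in> {(a', b'). a' + b' = A *v u}"
    obtain a b where ab: "p = (A *v a, A *v b)"
      using ex_matrix_vector_mult_eq[of "fst p"] ex_matrix_vector_mult_eq[of "snd p"]
      by (metis prod.collapse)
    with p have "a + b = u"
      by (simp add: matrix_vector_right_distrib[symmetric] matrix_vector_mult_cancel)
    with ab show "p \<in> (\<lambda>(a, b). (A *v a, A *v b)) ` {(a, b). a + b = u}"
      by auto
  qed (auto simp: matrix_vector_right_distrib)
  have "{phi_star A lam g a' + phi_star A lam f b' | a' b'. a' + b' = A *v u}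
      = (\<lambda>(a', b'). phi_star A lam g a' + phi_star A lam f b') ` {(a', b'). a' + b' = A *v u}"
    by auto
  also have "\<dots> = (\<lambda>(a, b). phi_star A lam g (A *v a) + phi_star A lam f (A *v b)) `
      {(a, b). a + b = u}"
    unfolding pairs image_image by (simp add: case_prod_beta)
  also have "\<dots> = (\<lambda>x. x + ereal (wdot lam u)) ` {g a + f b | a b. a + b = u}"
    by (force simp: phi_star_mult_vec wdot_add_right ac_simps simp flip: plus_ereal.simps(1))
  finally show "tmul (phi_star A lam g) (phi_star A lam f) (A *v u) = tmul g f u + ereal (wdot lam u)"
    unfolding tmul_def by (simp add: Inf_image_add_ereal)
qed

lemma phi_star_add_wdot:
  "phi_star A lam f (A *v u) + ereal (wdot w (A *v u)) = f u + ereal (wdot (trop_phi A lam w) u)"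
  by (cases "f u") (simp_all add: phi_star_mult_vec wdot_trop_phi)

lemma teval_phi_star: "teval (phi_star A lam f) w = teval f (trop_phi A lam w)"
proof -
  have "teval (phi_star A lam f) w = (INF v \<in> range ((*v) A). phi_star A lam f v + ereal (wdot w v))"
    using bij_is_surj[OF bij_matrix_vector_mult[OF A]] by (simp add: teval_def full_SetCompr_eq)
  also have "\<dots> = teval f (trop_phi A lam w)"
    by (simp add: teval_def full_SetCompr_eq image_image phi_star_add_wdot)
  finally show ?thesis .
qed

lemma initial_phi_star:
  "phi_star A 0 (initial (trop_phi A lam w) f) = initial w (phi_star A lam f)"
  unfolding phi_star_eq_iff
  by (simp add: initial_def phi_star_add_wdot teval_phi_star)
     (simp add: phi_star_mult_vec wdot_def zero_ereal_def)

lemma min_attained_twice_phi_star: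
  "min_attained_twice (phi_star A lam f) w \<longleftrightarrow> min_attained_twice f (trop_phi A lam w)"
  (is "?lhs \<longleftrightarrow> ?rhs")
proof
  have attained: "phi_star A lam f (A *v u) + ereal (wdot w (A *v u)) = teval (phi_star A lam f) w
      \<longleftrightarrow> f u + ereal (wdot (trop_phi A lam w) u) = teval f (trop_phi A lam w)" for u
    by (simp add: phi_star_add_wdot teval_phi_star)
  show ?lhs if ?rhs
  proof -
    obtain u v where "u \<noteq> v"
      "f u + ereal (wdot (trop_phi A lam w) u) = teval f (trop_phi A lam w)"
      "f v + ereal (wdot (trop_phi A lam w) v) = teval f (trop_phi A lam w)"
      using \<open>?rhs\<close> unfolding min_attained_twice_def by blast
    then show ?lhs
      unfolding min_attained_twice_def
      by (intro exI[of _ "A *v u"] exI[of _ "A *v v"]) (simp add: attained matrix_vector_mult_cancel)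
  qed
  assume ?lhs
  then obtain u' v' where "u' \<noteq> v'"
    "phi_star A lam f u' + ereal (wdot w u') = teval (phi_star A lam f) w"
    "phi_star A lam f v' + ereal (wdot w v') = teval (phi_star A lam f) w"
    unfolding min_attained_twice_def by blast
  moreover obtain u v where "u' = A *v u" "v' = A *v v"
    using ex_matrix_vector_mult_eq by blast
  ultimately show ?rhs
    unfolding min_attained_twice_def
    by (intro exI[of _ u] exI[of _ v]) (auto simp: attained)
qed

lemma tpoly_preimage_eq_vimage:
  assumes "\<forall>F\<in>I. is_tpoly F"
  shows "{f. is_tpoly f \<and> phi_star A lam f \<in> I} = phi_star A lam -` I"
  using assms is_tpoly_phi_star_iff by blast

lemma is_tideal_set_vimage_phi_star:
  assumes I: "is_tideal_set I"
  shows "is_tideal_set (phi_star A lam -` I)"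
proof -
  have "is_tpoly f" if "phi_star A lam f \<in> I" for f
    using I that is_tpoly_phi_star_iff unfolding is_tideal_set_def by blast
  then show ?thesis
    using I by (simp add: is_tideal_set_def is_tpoly_phi_star_iff phi_star_tzero
        phi_star_tadd phi_star_tmul)
qed

lemma tropical_ideal_vimage_phi_star:
  assumes I: "tropical_ideal I"
  shows "tropical_ideal (phi_star A lam -` I)"
  unfolding tropical_ideal_def
proof (intro conjI ballI allI impI)
  show "is_tideal_set (phi_star A lam -` I)"
    using I by (simp add: tropical_ideal_def is_tideal_set_vimage_phi_star)
  fix f g u
  assume "f \<in> phi_star A lam -` I" "g \<in> phi_star A lam -` I" and "f u = g u \<and> f u \<noteq> \<infinity>"
  then have "phi_star A lam f \<in> I" "phi_star A lam g \<in> I"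
    "phi_star A lam f (A *v u) = phi_star A lam g (A *v u) \<and> phi_star A lam f (A *v u) \<noteq> \<infinity>"
    by (auto simp: phi_star_mult_vec)
  then obtain H where "H \<in> I" "H (A *v u) = \<infinity>" and H:
    "\<And>v. min (phi_star A lam f v) (phi_star A lam g v) \<le> H v \<and>
      (phi_star A lam f v \<noteq> phi_star A lam g v \<longrightarrow> H v = min (phi_star A lam f v) (phi_star A lam g v))"
    using I unfolding tropical_ideal_def by blast
  obtain h where h: "H = phi_star A lam h"
    using surjD[OF surj_phi_star] by blast
  show "\<exists>h\<in>phi_star A lam -` I. h u = \<infinity> \<and>
      (\<forall>v. min (f v) (g v) \<le> h v \<and> (f v \<noteq> g v \<longrightarrow> h v = min (f v) (g v)))"
  proof (intro bexI conjI allI impI)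
    show "h \<in> phi_star A lam -` I" and "h u = \<infinity>"
      using \<open>H \<in> I\<close> \<open>H (A *v u) = \<infinity>\<close> by (simp_all add: h phi_star_mult_vec)
    fix v
    show "min (f v) (g v) \<le> h v"
      using H[of "A *v v"] by (simp add: h phi_star_mult_vec min_ereal_add_real)
    show "h v = min (f v) (g v)" if "f v \<noteq> g v"
      using H[of "A *v v"] that by (simp add: h phi_star_mult_vec min_ereal_add_real)
  qed
qed

lemma initial_ideal_vimage_phi_star:
  "phi_star A 0 ` initial_ideal (trop_phi A lam w) (phi_star A lam -` I) = initial_ideal w I"
proof -
  have "phi_star A 0 ` initial_ideal (trop_phi A lam w) (phi_star A lam -` I)
      = initial w ` phi_star A lam ` (phi_star A lam -` I)"
    unfolding initial_ideal_def image_image initial_phi_star ..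
  also have "\<dots> = initial_ideal w I"
    unfolding initial_ideal_def surj_image_vimage_eq[OF surj_phi_star] ..
  finally show ?thesis .
qed

lemma surj_trop_phi: "surj (trop_phi A lam)"
proof -
  have "surj (\<lambda>w. w v* map_matrix real_of_int A)"
    using A by (intro surj_vector_matrix_mult invertible_map_matrix_of_int)
  then have "y - lam \<in> range (\<lambda>w. w v* map_matrix real_of_int A)" for y
    by simp
  then have "y \<in> range (trop_phi A lam)" for y
    by (metis (no_types, lifting) diff_add_cancel imageE rangeI trop_phi_eq_vector_matrix_mult)
  then show ?thesis by blast
qed

lemma tvariety_vimage_phi_star:
  "tvariety (phi_star A lam -` I) = trop_phi A lam ` tvariety I"
proof -
  have "trop_phi A lam w \<in> tvariety (phi_star A lam -` I) \<longleftrightarrow>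
      (\<forall>f. phi_star A lam f \<in> I \<longrightarrow> phi_star A lam f \<noteq> tzero \<longrightarrow>
        min_attained_twice (phi_star A lam f) w)" for w
    by (auto simp: tvariety_altdef phi_star_eq_tzero_iff min_attained_twice_phi_star)
  also have "\<dots> w \<longleftrightarrow> w \<in> tvariety I" for w
    using surjD[OF surj_phi_star] unfolding tvariety_altdef mem_Collect_eq by metis
  finally have "trop_phi A lam -` tvariety (phi_star A lam -` I) = tvariety I"
    by blast
  then show ?thesis
    using surj_image_vimage_eq[OF surj_trop_phi] by metis
qed

end

theorem lemma4p5:
  fixes A :: "int ^ 'n ^ 'n::finite" and lam :: "real ^ 'n" and I :: "'n tpoly set"
  assumes "invertible A"
    and "tropical_ideal I"
  defines "I' \<equiv> {f. is_tpoly f \<and> phi_star A lam f \<in> I}"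
  shows "tropical_ideal I' \<and>
         (\<forall>w. phi_star A 0 ` initial_ideal (trop_phi A lam w) I' = initial_ideal w I) \<and>
         tvariety I' = trop_phi A lam ` tvariety I"
proof -
  have "I' = phi_star A lam -` I"
    using assms unfolding I'_def tropical_ideal_def is_tideal_set_def
    by (intro tpoly_preimage_eq_vimage) auto
  then show ?thesis
    using assms by (simp add: tropical_ideal_vimage_phi_star initial_ideal_vimage_phi_star
        tvariety_vimage_phi_star)
qed

end
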